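(* Let $\epsilon\in(0,0.01)$. There is a constant $c$ such that for all integers $k,m$ with $m\ge(\tfrac{1}{32\epsilon^2}-1)k\ge0$ and $k+m>0$, setting $\gamma=k+m$ and $$\xi_{k,m}(z)=\Big(\frac{1}{k!}\Big)^{1/2}\Big(\frac{\gamma}{2}\Big)^{\frac{k+1}{2}}\frac{z^k}{\sqrt\pi}\exp\Big(-\frac{\gamma}{4}|z|^2\Big),\qquad z\in\mathbb C,$$ one has $|\xi_{k,m}(z)|^2\le c\exp(-\tfrac{\gamma}{c}|z|^2)$ for every $z$ with $|z|\ge 9\epsilon$. *)

theory Defs
  imports Complex_Main
begin

definition xi :: "int \<Rightarrow> int \<Rightarrow> complex \<Rightarrow> complex" where
  "xi k m z = (let \<gamma> = real_of_int (k + m) in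
     complex_of_real (sqrt (1 / fact (nat k)) * (\<gamma> / 2) powr ((real_of_int k + 1) / 2)
        / sqrt pi * exp (- (\<gamma> / 4) * (cmod z)^2)) * z ^ (nat k))"

end

theory Submission imports Defs begin

text \<open>Up to the prefactor \<open>\<gamma>/(2\<pi>)\<close>, \<open>|\<xi>\<^sub>k\<^sub>,\<^sub>m(z)|\<^sup>2\<close> is the Poisson weight
\<open>t\<^sup>k e\<^sup>-\<^sup>t / k!\<close> at \<open>t = \<gamma>|z|\<^sup>2/2\<close>. The hypotheses give \<open>k \<le> 32\<epsilon>\<^sup>2\<gamma>\<close>, and with
\<open>|z| \<ge> 9\<epsilon>\<close> the index \<open>k\<close> is a small fraction of \<open>t\<close>, so \<open>t\<^sup>k/k! \<le> exp (9t/10 + k/9)\<close>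
still leaves the decay \<open>exp (-\<gamma>|z|\<^sup>2/200)\<close>. Part of this decay absorbs the prefactor
\<open>\<gamma>\<close>, because \<open>|z|\<close> is bounded below; the constant is \<open>c = 1/\<epsilon>\<^sup>2\<close>.\<close>

lemma power_div_fact_le_exp:
  fixes x :: real
  assumes "0 \<le> x"
  shows "x ^ n / fact n \<le> exp x"
proof -
  have series: "(\<lambda>n. x ^ n /\<^sub>R fact n) sums exp x"
    by (rule exp_converges)
  have "sum (\<lambda>n. x ^ n /\<^sub>R fact n) {n} \<le> suminf (\<lambda>n. x ^ n /\<^sub>R fact n)"
    by (rule sum_le_suminf) (use series assms in \<open>auto simp: sums_iff\<close>)
  then show ?thesis
    using series by (simp add: sums_iff divide_inverse mult.commute)
qed

lemma power_div_fact_le_exp_scaled: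
  fixes a t :: real
  assumes "0 < a" and "0 \<le> t"
  shows "t ^ n / fact n \<le> exp (a * t) / a ^ n"
proof -
  have "t ^ n / fact n = ((a * t) ^ n / fact n) / a ^ n"
    using assms by (simp add: power_mult_distrib)
  also have "\<dots> \<le> exp (a * t) / a ^ n"
    using assms by (intro divide_right_mono power_div_fact_le_exp) auto
  finally show ?thesis .
qed

lemma power_div_fact_le_exp_nine_tenths:
  fixes t :: real
  assumes "0 \<le> t"
  shows "t ^ n / fact n \<le> exp (9 * t / 10 + real n / 9)"
proof -
  have "1 / (9 / 10 :: real) ^ n = (10 / 9) ^ n"
    by (simp add: power_divide)
  also have "\<dots> \<le> exp (1 / 9) ^ n"
    using exp_ge_add_one_self[of "1 / 9 :: real"] by (intro power_mono) auto
  also have "\<dots> = exp (real n / 9)"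
    by (simp add: exp_of_nat_mult[symmetric])
  finally have "exp (9 / 10 * t) * (1 / (9 / 10) ^ n) \<le> exp (9 / 10 * t) * exp (real n / 9)"
    by (intro mult_left_mono) auto
  with power_div_fact_le_exp_scaled[of "9 / 10" t n] assms
  show ?thesis
    by (simp add: exp_add)
qed

lemma norm_xi_squared:
  fixes k m :: int
  assumes "0 \<le> k" and "0 < k + m"
  defines "\<gamma> \<equiv> real_of_int (k + m)"
  shows "(cmod (xi k m z))\<^sup>2 =
    (\<gamma> / 2) ^ (nat k + 1) / (fact (nat k) * pi) * exp (- (\<gamma> / 2) * (cmod z)\<^sup>2) * (cmod z) ^ (2 * nat k)"
proof -
  have "0 < \<gamma>"
    using assms by (simp add: \<gamma>_def)
  have powr_squared: "((\<gamma> / 2) powr ((real_of_int k + 1) / 2))\<^sup>2 = (\<gamma> / 2) ^ (nat k + 1)"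
  proof -
    have "((\<gamma> / 2) powr ((real_of_int k + 1) / 2))\<^sup>2 = (\<gamma> / 2) powr (real (nat k + 1))"
      using \<open>0 < \<gamma>\<close> \<open>0 \<le> k\<close>
      by (simp add: power2_eq_square powr_add[symmetric] add.commute)
    also have "\<dots> = (\<gamma> / 2) ^ (nat k + 1)"
      using \<open>0 < \<gamma>\<close> by (intro powr_realpow) simp
    finally show ?thesis .
  qed
  have exp_squared: "(exp (- (\<gamma> / 4) * (cmod z)\<^sup>2))\<^sup>2 = exp (- (\<gamma> / 2) * (cmod z)\<^sup>2)"
    by (simp add: power2_eq_square exp_add[symmetric])
  have "(cmod (xi k m z))\<^sup>2 = (sqrt (1 / fact (nat k)) * (\<gamma> / 2) powr ((real_of_int k + 1) / 2)
        / sqrt pi * exp (- (\<gamma> / 4) * (cmod z)\<^sup>2))\<^sup>2 * (cmod z ^ nat k)\<^sup>2"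
    by (simp only: xi_def \<gamma>_def Let_def norm_mult norm_power norm_of_real power_mult_distrib power2_abs)
  also have "\<dots> = (\<gamma> / 2) ^ (nat k + 1) / (fact (nat k) * pi)
      * exp (- (\<gamma> / 2) * (cmod z)\<^sup>2) * (cmod z) ^ (2 * nat k)"
    unfolding power_mult_distrib power_divide powr_squared exp_squared
    by (simp add: power_mult[symmetric] mult.commute)
  finally show ?thesis .
qed

lemma poisson_weight_decay:
  fixes g r :: real
  assumes "0 < g" and "real n \<le> 32 / 81 * g * r\<^sup>2"
  shows "(g / 2) ^ (n + 1) / (fact n * pi) * exp (- (g / 2) * r\<^sup>2) * r ^ (2 * n)
    \<le> g / (2 * pi) * exp (- g * r\<^sup>2 / 200)"
proof -
  define t where "t = g * r\<^sup>2 / 2"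
  have "0 \<le> t"
    using assms by (simp add: t_def)
  have "(g / 2) ^ (n + 1) / (fact n * pi) * exp (- (g / 2) * r\<^sup>2) * r ^ (2 * n)
      = g / (2 * pi) * (t ^ n / fact n) * exp (- t)"
    by (simp add: t_def power_mult_distrib power_mult power2_eq_square field_simps)
  also have "\<dots> \<le> g / (2 * pi) * exp (9 * t / 10 + real n / 9) * exp (- t)"
    using power_div_fact_le_exp_nine_tenths[OF \<open>0 \<le> t\<close>, of n] assms
    by (intro mult_right_mono mult_left_mono) auto
  also have "\<dots> = g / (2 * pi) * exp (real n / 9 - t / 10)"
    by (simp add: exp_add[symmetric] algebra_simps)
  also have "\<dots> \<le> g / (2 * pi) * exp (- g * r\<^sup>2 / 200)"
    using assms \<open>0 \<le> t\<close> by (intro mult_left_mono) (auto simp: t_def)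
  finally show ?thesis .
qed

lemma linear_times_gaussian_le:
  fixes e g r :: real
  assumes "0 < e" and "e < 0.01" and "0 < g" and "9 * e \<le> r"
  shows "g / (2 * pi) * exp (- g * r\<^sup>2 / 200) \<le> 1 / e\<^sup>2 * exp (- (e\<^sup>2 * g) * r\<^sup>2)"
proof -
  have "(9 * e)\<^sup>2 \<le> r\<^sup>2"
    using assms by (intro power_mono) auto
  then have "81 * e\<^sup>2 * g \<le> g * r\<^sup>2"
    using \<open>0 < g\<close> by (simp add: power_mult_distrib mult.commute)
  have "e\<^sup>2 \<le> 1 / 600"
  proof -
    have "e\<^sup>2 \<le> (1 / 100)\<^sup>2"
      using assms by (intro power_mono) auto
    then show ?thesis by (simp add: power_divide)
  qed
  have "g / (2 * pi) \<le> 300 / (324 * e\<^sup>2) * (81 * e\<^sup>2 * g / 300)"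
    using pi_ge_two assms by (simp add: field_simps)
  also have "\<dots> \<le> 1 / e\<^sup>2 * exp (81 * e\<^sup>2 * g / 300)"
    using exp_ge_add_one_self[of "81 * e\<^sup>2 * g / 300"] assms
    by (intro mult_mono) (auto simp: field_simps)
  also have "\<dots> \<le> 1 / e\<^sup>2 * exp (g * r\<^sup>2 / 300)"
    using \<open>81 * e\<^sup>2 * g \<le> g * r\<^sup>2\<close> \<open>0 < e\<close>
    by (intro mult_left_mono) (auto simp: mult_ac)
  finally have "g / (2 * pi) * exp (- g * r\<^sup>2 / 200)
      \<le> 1 / e\<^sup>2 * exp (g * r\<^sup>2 / 300) * exp (- g * r\<^sup>2 / 200)"
    by (intro mult_right_mono) auto
  also have "\<dots> = 1 / e\<^sup>2 * exp (- (g * r\<^sup>2) / 600)"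
    by (simp add: exp_add[symmetric])
  also have "\<dots> \<le> 1 / e\<^sup>2 * exp (- (e\<^sup>2 * g) * r\<^sup>2)"
  proof -
    have "e\<^sup>2 * (g * r\<^sup>2) \<le> 1 / 600 * (g * r\<^sup>2)"
      using \<open>e\<^sup>2 \<le> 1 / 600\<close> \<open>0 < g\<close> by (intro mult_right_mono) auto
    then show ?thesis
      using \<open>0 < e\<close> by (intro mult_left_mono) (auto simp: mult_ac)
  qed
  finally show ?thesis .
qed

lemma index_bound_of_ratio_condition:
  fixes s :: real and k m :: int
  assumes "0 < s" and "s < 1"
    and "(1 / s - 1) * real_of_int k \<le> real_of_int m" and "0 \<le> (1 / s - 1) * real_of_int k"
  shows "0 \<le> k" and "real_of_int k \<le> s * real_of_int (k + m)"
proof -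
  have "0 < 1 / s - 1"
    using assms by (simp add: field_simps)
  then show "0 \<le> k"
    using assms(4) by (auto simp: zero_le_mult_iff)
  show "real_of_int k \<le> s * real_of_int (k + m)"
    using assms(1,3) by (simp add: field_simps)
qed

theorem lemma5p9:
  fixes \<epsilon> :: real
  assumes "0 < \<epsilon>" and "\<epsilon> < 0.01"
  shows "\<exists>c::real. c > 0 \<and>
    (\<forall>k m :: int. real_of_int m \<ge> (1 / (32 * \<epsilon>^2) - 1) * real_of_int k
        \<and> (1 / (32 * \<epsilon>^2) - 1) * real_of_int k \<ge> 0 \<and> k + m > 0 \<longrightarrow>
      (\<forall>z::complex. cmod z \<ge> 9 * \<epsilon> \<longrightarrow>
         (cmod (xi k m z))^2 \<le> c * exp (- (real_of_int (k + m) / c) * (cmod z)^2)))"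
proof (intro exI[of _ "1 / \<epsilon>\<^sup>2"] conjI allI impI)
  show "0 < 1 / \<epsilon>\<^sup>2"
    using assms by simp
  fix k m :: int and z :: complex
  assume km: "real_of_int m \<ge> (1 / (32 * \<epsilon>\<^sup>2) - 1) * real_of_int k
        \<and> (1 / (32 * \<epsilon>\<^sup>2) - 1) * real_of_int k \<ge> 0 \<and> k + m > 0"
    and z: "cmod z \<ge> 9 * \<epsilon>"
  define \<gamma> where "\<gamma> = real_of_int (k + m)"
  have "0 < \<gamma>"
    using km by (simp add: \<gamma>_def)
  have "\<epsilon>\<^sup>2 \<le> (1 / 100)\<^sup>2"
    using assms by (intro power_mono) auto
  then have "32 * \<epsilon>\<^sup>2 < 1"
    by (simp add: power_divide)
  then have "0 \<le> k" and "real_of_int k \<le> 32 * \<epsilon>\<^sup>2 * \<gamma>"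
    using index_bound_of_ratio_condition[of "32 * \<epsilon>\<^sup>2" k m] km assms by (auto simp: \<gamma>_def)
  have "(9 * \<epsilon>)\<^sup>2 \<le> (cmod z)\<^sup>2"
    using z assms by (intro power_mono) auto
  then have "32 * \<epsilon>\<^sup>2 * \<gamma> \<le> 32 / 81 * \<gamma> * (cmod z)\<^sup>2"
    using \<open>0 < \<gamma>\<close> by (simp add: power_mult_distrib)
  with \<open>0 \<le> k\<close> \<open>real_of_int k \<le> 32 * \<epsilon>\<^sup>2 * \<gamma>\<close>
  have "real (nat k) \<le> 32 / 81 * \<gamma> * (cmod z)\<^sup>2"
    by (simp only: of_nat_nat)
  from norm_xi_squared[OF \<open>0 \<le> k\<close>, of m z] km
    poisson_weight_decay[OF \<open>0 < \<gamma>\<close> this]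
    linear_times_gaussian_le[OF assms \<open>0 < \<gamma>\<close> z]
  show "(cmod (xi k m z))\<^sup>2 \<le> 1 / \<epsilon>\<^sup>2 * exp (- (real_of_int (k + m) / (1 / \<epsilon>\<^sup>2)) * (cmod z)\<^sup>2)"
    by (simp add: \<gamma>_def mult_ac)
qed

end
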